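(* Consider the Fuchsian system $\frac{d\Phi}{dz}=\left[\frac{A_1}{z}+\frac{A_2}{z-x}+\frac{A_3}{z-1}\right]\Phi$ with $A_1=\begin{pmatrix}-\frac{(\sqrt x+1)^2}{16\sqrt x}&-\frac1{2\sqrt x}\\ \frac{(\sqrt x+1)^4}{128\sqrt x}&\frac{(\sqrt x+1)^2}{16\sqrt x}\end{pmatrix}$, $A_2=\begin{pmatrix}-\frac{3\sqrt x-1}{16\sqrt x}&\frac1{2(\sqrt x+1)\sqrt x}\\ -\frac{(\sqrt x+1)(3\sqrt x-1)^2}{128\sqrt x}&\frac{3\sqrt x-1}{16\sqrt x}\end{pmatrix}$, $A_3=\begin{pmatrix}\frac1{16}(\sqrt x-3)&\frac1{2(\sqrt x+1)}\\ -\frac1{128}(\sqrt x-3)^2(\sqrt x+1)&\frac1{16}(3-\sqrt x)\end{pmatrix}$, which is an isomonodromic (Schlesinger) deformation in $x$ with $A_\infty=-(A_1+A_2+A_3)=\mathrm{diag}(\tfrac12,-\tfrac12)$ and $R^{(\infty)}=\begin{pmatrix}0&-\frac12\\0&0\end{pmatrix}$. Let $\Phi=(I+\Psi_1/z+O(1/z^2))z^{-A_\infty}z^{-R^{(\infty)}}$ be a fundamental matrix solution which also satisfies $\partial\Phi/\partial x=-\frac{A_2}{z-x}\Phi$. Then $(\Psi_1)_{12}=-\log(\sqrt x+1)$ (up to an additive constant), so $\Psi_1$ does not have entries in the field $\mathbb C(\sqrt x)$, whereas the differential field generated by $x$ and the entries of $A_1,A_2,A_3$ (and their derivatives) is isomorphic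 to $\mathbb C(\sqrt x)$.
   Context: Here the poles are $u_1=0$, $u_2=x$, $u_3=1$ with only $x$ varying; the Schlesinger equations reduce to $\partial_xA_1=\frac{[A_2,A_1]}{x}$, $\partial_xA_3=\frac{[A_2,A_3]}{x-1}$, $\partial_xA_2=-\frac{[A_2,A_1]}{x}-\frac{[A_2,A_3]}{x-1}$. $I$ is the $2\times2$ identity matrix and $\sqrt x$ denotes a fixed branch of the square root. *)

theory Defs
  imports "HOL-Analysis.Analysis" "HOL-Computational_Algebra.Polynomial"
begin

text \<open>2x2 complex matrices are rendered as complex^2^2 (HOL-Analysis).
  mat2 a b c d is the matrix with rows (a, b) and (c, d).\<close>

definition mat2 :: "complex \<Rightarrow> complex \<Rightarrow> complex \<Rightarrow> complex \<Rightarrow> complex^2^2" where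
  "mat2 a b c d = (\<chi> i j. if i = 1 then (if j = 1 then a else b) else (if j = 1 then c else d))"

definition cscale :: "complex \<Rightarrow> complex^2^2 \<Rightarrow> complex^2^2" where
  "cscale c M = (\<chi> i j. c * M $ i $ j)"

text \<open>The residue matrices, as functions of s = sqrt x (a fixed branch).\<close>

definition A1 :: "complex \<Rightarrow> complex^2^2" where
  "A1 s = mat2 (- ((s + 1)^2) / (16 * s))        (- 1 / (2 * s))
               ((s + 1)^4 / (128 * s))         ((s + 1)^2 / (16 * s))"

definition A2 :: "complex \<Rightarrow> complex^2^2" where
  "A2 s = mat2 (- (3 * s - 1) / (16 * s))                  (1 / (2 * (s + 1) * s))
               (- ((s + 1) * (3 * s - 1)^2) / (128 * s))      ((3 * s - 1) / (16 * s))"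

definition A3 :: "complex \<Rightarrow> complex^2^2" where
  "A3 s = mat2 ((s - 3) / 16)                    (1 / (2 * (s + 1)))
               (- ((s - 3)^2 * (s + 1)) / 128)     ((3 - s) / 16)"

text \<open>A_inf = -(A1+A2+A3) = diag(1/2,-1/2) and R_inf = ((0,-1/2),(0,0)).\<close>

definition Ainf :: "complex^2^2" where "Ainf = mat2 (1/2) 0 0 (-1/2)"
definition Rinf :: "complex^2^2" where "Rinf = mat2 0 (-1/2) 0 0"

definition fuchs_coeff :: "complex \<Rightarrow> complex \<Rightarrow> complex \<Rightarrow> complex^2^2" where
  "fuchs_coeff s x z = cscale (1 / z) (A1 s) + cscale (1 / (z - x)) (A2 s) + cscale (1 / (z - 1)) (A3 s)"

text \<open>z^(-A_inf) = exp(-A_inf log z) = diag(z^(-1/2), z^(1/2)) and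
  z^(-R_inf) = exp(-R_inf log z) = I - R_inf log z (R_inf is nilpotent),
  with the principal branch Ln of log z on the plane slit along (-inf,0].\<close>

definition zpow_negAinf :: "complex \<Rightarrow> complex^2^2" where
  "zpow_negAinf z = mat2 (exp (- (1/2) * Ln z)) 0 0 (exp ((1/2) * Ln z))"

definition zpow_negRinf :: "complex \<Rightarrow> complex^2^2" where
  "zpow_negRinf z = mat 1 - cscale (Ln z) Rinf"

text \<open>Domain of (z, x): x in U, z in a slit neighbourhood of infinity
  avoiding the poles 0, x, 1.\<close>

definition dom_zx :: "complex set \<Rightarrow> (complex \<times> complex) set" where
  "dom_zx U = {(z, x). x \<in> U \<and> max 1 (norm x) < norm z \<and> \<not> (Im z = 0 \<and> Re z \<le> 0)}"

end

(* Write the solution as G z^(-A_inf) z^(-R_inf) with G = I + Psi1/z + O(z^-2). The x-equation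
   becomes dG/dx = A2 G / (x - z), so z dG/dx tends to -A2 as z -> +oo along the reals, uniformly
   for x in small balls, and passing to the limit in the derivatives gives Psi1' = -A2.
   Since (A2)_12 = (sqrt x)' / (sqrt x + 1), the entry Psi1_12 + log (sqrt x + 1) is constant.
   If Psi1_12 were r (sqrt x) with r rational, then r'(w) = -1/(w + 1) on infinitely many w,
   hence wherever r is defined; but r' integrates to 0 over a circle around -1 enclosing the
   poles of r, while -1/(w + 1) integrates to -2 pi i. *)

theory Submission
  imports Defs "HOL-Complex_Analysis.Complex_Analysis"
begin

no_notation fps_nth (infixl "$" 75)

lemma exp_eq_of_log_derivative:
  fixes f g g' :: "complex \<Rightarrow> complex"
  assumes "open U" "connected U"
    and g: "\<And>x. x \<in> U \<Longrightarrow> (g has_field_derivative g' x) (at x)" "\<And>x. x \<in> U \<Longrightarrow> g x \<noteq> 0"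
    and f: "\<And>x. x \<in> U \<Longrightarrow> (f has_field_derivative - (g' x / g x)) (at x)"
  shows "\<exists>c. \<forall>x\<in>U. exp (c - f x) = g x"
proof -
  define F where "F x = g x * exp (f x)" for x
  have F': "(F has_field_derivative 0) (at x)" if "x \<in> U" for x
  proof -
    have "(F has_field_derivative g' x * exp (f x) + exp (f x) * - (g' x / g x) * g x) (at x)"
      unfolding F_def using that by (intro DERIV_mult g DERIV_fun_exp f)
    then show ?thesis using g(2)[OF that] by simp
  qed
  then have "continuous_on U F"
    by (meson DERIV_continuous continuous_at_imp_continuous_on)
  then obtain k where k: "\<And>x. x \<in> U \<Longrightarrow> F x = k"
    using DERIV_zero_connected_constant[OF assms(2,1) finite.emptyI] F' by blast
  have "exp (Ln k - f x) = g x" if "x \<in> U" for x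
  proof -
    have k_eq: "k = g x * exp (f x)" using k[OF that] by (simp add: F_def)
    then have "k \<noteq> 0" using g(2)[OF that] by simp
    then have "exp (Ln k - f x) = k / exp (f x)" by (simp add: exp_diff)
    also have "\<dots> = g x" by (simp add: k_eq)
    finally show ?thesis .
  qed
  then show ?thesis by blast
qed

lemma no_rational_primitive_of_pole:
  fixes p q :: "complex poly"
  assumes "q \<noteq> 0" "c \<noteq> 0"
    and primitive: "\<And>w. poly q w \<noteq> 0 \<Longrightarrow> w \<noteq> a \<Longrightarrow>
      ((\<lambda>w. poly p w / poly q w) has_field_derivative c / (w - a)) (at w)"
  shows False
proof -
  define R where "R = 1 + (\<Sum>z\<in>{z. poly q z = 0}. norm (z - a))"
  have "finite {z. poly q z = 0}" using \<open>q \<noteq> 0\<close> by (rule poly_roots_finite)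
  then have root_inside: "norm (z - a) < R" if "poly q z = 0" for z
    using member_le_sum[of z "{z. poly q z = 0}" "\<lambda>z. norm (z - a)"] that by (simp add: R_def)
  have "R > 0" unfolding R_def by (simp add: add_pos_nonneg sum_nonneg)
  let ?S = "{w. poly q w \<noteq> 0 \<and> w \<noteq> a}" and ?r = "\<lambda>w. poly p w / poly q w"
  have on_circle: "path_image (circlepath a R) \<subseteq> ?S"
  proof
    fix w assume "w \<in> path_image (circlepath a R)"
    then have "norm (w - a) = R" using \<open>R > 0\<close> by (simp add: dist_norm norm_minus_commute)
    then show "w \<in> ?S" using root_inside \<open>R > 0\<close> by force
  qed
  have "(?r has_field_derivative c / (w - a)) (at w within ?S)" if "w \<in> ?S" for w
    using that by (auto intro: has_field_derivative_at_within[OF primitive])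
  then have "((\<lambda>w. c / (w - a)) has_contour_integral
      ?r (pathfinish (circlepath a R)) - ?r (pathstart (circlepath a R))) (circlepath a R)"
    by (rule contour_integral_primitive[OF _ valid_path_circlepath on_circle])
  then have "((\<lambda>w. c / (w - a)) has_contour_integral 0) (circlepath a R)"
    by simp
  moreover have "((\<lambda>w. c / (w - a)) has_contour_integral 2 * of_real pi * \<i> * c) (circlepath a R)"
    using Cauchy_integral_circlepath_simple[of "\<lambda>_. c"] \<open>R > 0\<close> by simp
  ultimately have "0 = 2 * of_real pi * \<i> * c"
    by (rule has_contour_integral_unique)
  then show False using \<open>c \<noteq> 0\<close> by simp
qed

lemma no_rational_primitive_of_pole_on_infinite_set:
  fixes p q :: "complex poly"
  assumes "infinite S" "c \<noteq> 0"
    and primitive: "\<And>w. w \<in> S \<Longrightarrow> poly q w \<noteq> 0 \<and>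
      ((\<lambda>w. poly p w / poly q w) has_field_derivative c / (w - a)) (at w)"
  shows False
proof -
  define W where "W = pderiv p * q - p * pderiv q"
  have quotient_rule: "((\<lambda>w. poly p w / poly q w) has_field_derivative poly W w / (poly q w * poly q w)) (at w)"
    if "poly q w \<noteq> 0" for w
    using DERIV_divide[OF poly_DERIV poly_DERIV that] by (simp add: W_def)
  define P where "P = W * [:- a, 1:] - smult c (q * q)"
  have "poly P w = 0" if "w \<in> S - {a}" for w
  proof -
    have "w \<in> S" "w \<noteq> a" using that by auto
    then have q: "poly q w \<noteq> 0" using primitive by blast
    have "poly W w / (poly q w * poly q w) = c / (w - a)"
      using DERIV_unique[OF quotient_rule[OF q]] primitive[OF \<open>w \<in> S\<close>] by blast
    then show ?thesis using q \<open>w \<noteq> a\<close> by (simp add: P_def field_simps)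
  qed
  then have "S - {a} \<subseteq> {w. poly P w = 0}" by blast
  moreover have "infinite (S - {a})" using \<open>infinite S\<close> by simp
  ultimately have "P = 0" using poly_roots_finite finite_subset by blast
  obtain w where "w \<in> S" using \<open>infinite S\<close> by fastforce
  then have "q \<noteq> 0" using primitive by fastforce
  then show False
  proof (rule no_rational_primitive_of_pole[OF _ \<open>c \<noteq> 0\<close>])
    fix w assume "poly q w \<noteq> 0" "w \<noteq> a"
    moreover have "poly P w = 0" using \<open>P = 0\<close> by simp
    ultimately have "poly W w / (poly q w * poly q w) = c / (w - a)"
      by (simp add: P_def field_simps)
    then show "((\<lambda>w. poly p w / poly q w) has_field_derivative c / (w - a)) (at w)"
      using quotient_rule[OF \<open>poly q w \<noteq> 0\<close>] by simp
  qed
qed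

lemma logarithm_not_rational_in_branch:
  fixes p q :: "complex poly"
  assumes "open U" "U \<noteq> {}" "inj_on s U" "c \<noteq> 0"
    and s: "\<And>x. x \<in> U \<Longrightarrow> (s has_field_derivative s' x) (at x)" "\<And>x. x \<in> U \<Longrightarrow> s' x \<noteq> 0"
    and f: "\<And>x. x \<in> U \<Longrightarrow> (f has_field_derivative c * s' x / (s x - a)) (at x)"
  shows "\<not> (\<forall>x\<in>U. poly q (s x) \<noteq> 0 \<and> f x = poly p (s x) / poly q (s x))"
proof
  assume rational: "\<forall>x\<in>U. poly q (s x) \<noteq> 0 \<and> f x = poly p (s x) / poly q (s x)"
  have "infinite (s ` U)"
    using \<open>inj_on s U\<close> finite_imageD finite_imp_not_open \<open>open U\<close> \<open>U \<noteq> {}\<close> by blast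
  then show False
  proof (rule no_rational_primitive_of_pole_on_infinite_set[OF _ \<open>c \<noteq> 0\<close>])
    fix w assume "w \<in> s ` U"
    then obtain x where x: "x \<in> U" and w: "w = s x" by blast
    define r' where "r' = (poly (pderiv p) w * poly q w - poly p w * poly (pderiv q) w) / (poly q w * poly q w)"
    have q: "poly q w \<noteq> 0" using rational x unfolding w by blast
    then have r: "((\<lambda>w. poly p w / poly q w) has_field_derivative r') (at w)"
      unfolding r'_def by (intro DERIV_divide poly_DERIV)
    have "((\<lambda>x. poly p (s x) / poly q (s x)) has_field_derivative r' * s' x) (at x)"
      using DERIV_chain2[OF r[unfolded w] s(1)[OF x]] .
    then have "(f has_field_derivative r' * s' x) (at x)"
      by (rule has_field_derivative_transform_within_open[OF _ \<open>open U\<close> x]) (use rational in simp)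
    then have "r' * s' x = c / (s x - a) * s' x"
      using f[OF x] DERIV_unique by fastforce
    then have "r' = c / (w - a)"
      using mult_right_cancel[OF s(2)[OF x]] unfolding w by blast
    then show "poly q w \<noteq> 0 \<and> ((\<lambda>w. poly p w / poly q w) has_field_derivative c / (w - a)) (at w)"
      using q r by simp
  qed
qed

lemma square_root_ne_0_and_minus_1:
  fixes w x :: complex
  assumes "w\<^sup>2 = x" "x \<noteq> 0" "x \<noteq> 1"
  shows "w \<noteq> 0" "w + 1 \<noteq> 0"
proof -
  show "w \<noteq> 0" using assms by auto
  show "w + 1 \<noteq> 0"
  proof
    assume "w + 1 = 0"
    then have "w = -1" by (simp add: eq_neg_iff_add_eq_0)
    then show False using assms by simp
  qed
qed

lemma sqrt_branch_has_field_derivative: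
  assumes "open U" "s holomorphic_on U" "\<And>x. x \<in> U \<Longrightarrow> (s x)^2 = x" "x \<in> U"
  shows "(s has_field_derivative 1 / (2 * s x)) (at x)"
proof -
  obtain s' where s': "(s has_field_derivative s') (at x)"
    using holomorphic_on_imp_differentiable_at[OF assms(2,1,4)] field_differentiable_def by blast
  have "((\<lambda>y. s y * s y) has_field_derivative s' * s x + s' * s x) (at x)"
    by (rule DERIV_mult[OF s' s'])
  then have "((\<lambda>y. y) has_field_derivative s' * s x + s' * s x) (at x)"
    by (rule has_field_derivative_transform_within_open[OF _ assms(1,4)])
       (use assms(3) in \<open>simp add: power2_eq_square\<close>)
  then have "s' * s x + s' * s x = 1"
    using DERIV_ident DERIV_unique by blast
  moreover from this have "s x \<noteq> 0" by auto
  ultimately have "s' = 1 / (2 * s x)"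
    by (simp add: field_simps)
  then show ?thesis using s' by simp
qed

lemma norm_matrix_nth_le: "norm (M $ i $ j) \<le> norm (M :: 'a::real_normed_vector^'n^'m)"
  by (rule order_trans[OF Finite_Cartesian_Product.norm_nth_le Finite_Cartesian_Product.norm_nth_le])

lemma norm_le_sum_norm_matrix_nth:
  "norm (M :: 'a::real_normed_vector^'n^'m) \<le> (\<Sum>i\<in>UNIV. \<Sum>j\<in>UNIV. norm (M $ i $ j))"
proof -
  have "norm M \<le> (\<Sum>i\<in>UNIV. norm (M $ i))"
    unfolding norm_vec_def by (rule L2_set_le_sum) simp
  also have "\<dots> \<le> (\<Sum>i\<in>UNIV. \<Sum>j\<in>UNIV. norm (M $ i $ j))"
    unfolding norm_vec_def[of "M $ _"] by (intro sum_mono L2_set_le_sum) simp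
  finally show ?thesis .
qed

lemma norm_matrix_mult_nth_le:
  fixes A :: "'a::real_normed_algebra_1^'k^'m" and B :: "'a^'n^'k"
  shows "norm ((A ** B) $ i $ j) \<le> real CARD('k) * norm A * norm B"
proof -
  have "norm ((A ** B) $ i $ j) \<le> (\<Sum>k\<in>UNIV. norm (A $ i $ k) * norm (B $ k $ j))"
    unfolding matrix_matrix_mult_def by (auto intro: order_trans[OF norm_sum] sum_mono norm_mult_ineq)
  also have "\<dots> \<le> (\<Sum>k\<in>(UNIV :: 'k set). norm A * norm B)"
    by (rule sum_mono, rule mult_mono) (auto simp: norm_matrix_nth_le)
  finally show ?thesis by simp
qed

lemma continuous_on_matrixI:
  assumes "\<And>i j. continuous_on S (\<lambda>x. F x $ i $ j)"
  shows "continuous_on S (F :: 'a::topological_space \<Rightarrow> 'b::topological_space^'n^'m)"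
proof -
  have "continuous_on S (\<lambda>x. \<chi> i j. F x $ i $ j)"
    by (intro continuous_on_vec_lambda assms)
  then show ?thesis by simp
qed

lemma uniform_limit_of_tendsto: "(f \<longlongrightarrow> l) F \<Longrightarrow> uniform_limit S (\<lambda>n x. f n) (\<lambda>x. l) F"
  by (auto simp: uniform_limit_iff tendsto_iff elim!: eventually_mono)

lemma uniform_limit_iff_diff_zero:
  fixes f :: "'i \<Rightarrow> 'a \<Rightarrow> 'b::real_normed_vector"
  shows "uniform_limit S f l F \<longleftrightarrow> uniform_limit S (\<lambda>n x. f n x - l x) (\<lambda>_. 0) F"
  by (simp add: uniform_limit_iff dist_norm)

lemma tendsto_scaleR_zero_of_decay:
  fixes E :: "real \<Rightarrow> 'a::real_normed_vector"
  assumes "\<forall>\<^sub>F t in at_top. norm (E t) \<le> C / t\<^sup>2"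
  shows "((\<lambda>t. t *\<^sub>R E t) \<longlongrightarrow> 0) at_top"
proof (rule Lim_null_comparison)
  show "\<forall>\<^sub>F t in at_top. norm (t *\<^sub>R E t) \<le> C / t"
    using assms eventually_gt_at_top[of 0]
  proof eventually_elim
    case (elim t)
    then have "t * norm (E t) \<le> t * (C / t\<^sup>2)" by (intro mult_left_mono) auto
    with elim show ?case by (simp add: power2_eq_square)
  qed
  show "((\<lambda>t. C / t) \<longlongrightarrow> 0) at_top"
    by (intro tendsto_divide_0[OF tendsto_const] filterlim_at_top_imp_at_infinity filterlim_ident)
qed

(* G t x models the factor I + Psi x / z + O(z^-2) of a solution normalised at infinity, taken at
   real z = t; of the isomonodromy equations only the one in x is assumed. *)
locale normalized_deformation =
  fixes U :: "complex set"
    and A :: "complex \<Rightarrow> complex^'n^'n"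
    and G :: "real \<Rightarrow> complex \<Rightarrow> complex^'n^'n"
    and \<Psi> :: "complex \<Rightarrow> complex^'n^'n"
  assumes open_U: "open U"
    and continuous_on_A: "continuous_on U A"
    and G_has_field_derivative: "\<And>t x i j. x \<in> U \<Longrightarrow> max 1 (norm x) < t \<Longrightarrow>
      ((\<lambda>y. G t y $ i $ j) has_field_derivative (A x ** G t x) $ i $ j / (x - of_real t)) (at x)"
    and G_expansion: "\<And>x. x \<in> U \<Longrightarrow> ((\<lambda>t. t *\<^sub>R (G t x - mat 1)) \<longlongrightarrow> \<Psi> x) at_top"
begin

lemma G_tendsto:
  assumes "x \<in> U"
  shows "((\<lambda>t. G t x) \<longlongrightarrow> mat 1) at_top"
proof -
  have "((\<lambda>t. mat 1 + inverse t *\<^sub>R (t *\<^sub>R (G t x - mat 1))) \<longlongrightarrow> mat 1 + 0 *\<^sub>R \<Psi> x) at_top"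
    by (intro tendsto_add tendsto_const tendsto_scaleR G_expansion assms
        tendsto_inverse_0_at_top filterlim_ident)
  moreover have "\<forall>\<^sub>F t in at_top. mat 1 + inverse t *\<^sub>R (t *\<^sub>R (G t x - mat 1)) = G t x"
    using eventually_gt_at_top[of 0] by eventually_elim simp
  ultimately show ?thesis
    using tendsto_cong by fastforce
qed

context
  fixes x0 :: complex and \<delta> K :: real
  assumes cball_subset: "cball x0 \<delta> \<subseteq> U" and \<delta>_pos: "0 < \<delta>"
    and A_bound: "\<And>y. y \<in> cball x0 \<delta> \<Longrightarrow> norm (A y) \<le> K"
begin

lemma A_bound_nonneg: "0 \<le> K"
proof -
  have "norm (A x0) \<le> K" using \<delta>_pos by (intro A_bound) simp
  then show ?thesis using norm_ge_zero[of "A x0"] by linarith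
qed

lemma large_real_pos:
  assumes "2 * (norm x0 + \<delta>) + 1 \<le> t"
  shows "0 < t"
  using assms \<delta>_pos norm_ge_zero[of x0] by (smt (verit))

lemma cball_far_from_large_real:
  assumes "y \<in> cball x0 \<delta>" "2 * (norm x0 + \<delta>) + 1 \<le> t"
  shows "norm y \<le> norm x0 + \<delta>" "max 1 (norm y) < t" "t / 2 \<le> norm (y - of_real t)"
proof -
  have "norm y \<le> norm x0 + norm (y - x0)" by (rule norm_triangle_sub)
  also have "norm (y - x0) \<le> \<delta>" using assms(1) by (simp add: dist_norm norm_minus_commute)
  finally show y: "norm y \<le> norm x0 + \<delta>" by simp
  then show "max 1 (norm y) < t" using assms(2) \<delta>_pos norm_ge_zero[of x0] by (smt (verit))
  have "norm (of_real t :: complex) - norm y \<le> norm (y - of_real t)"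
    by (metis norm_minus_commute norm_triangle_ineq2)
  then show "t / 2 \<le> norm (y - of_real t)" using y assms(2) \<delta>_pos by simp
qed

lemma G_derivative_nth_le:
  assumes t: "2 * (norm x0 + \<delta>) + 1 \<le> t"
    and w: "w \<in> cball x0 \<delta>" and M: "norm (G t w) \<le> M"
  shows "norm ((A w ** G t w) $ i $ j / (w - of_real t)) \<le> 2 * real CARD('n) * K * M / t"
proof -
  have t_pos: "0 < t" using large_real_pos[OF t(1)] .
  have bound_nonneg: "0 \<le> real CARD('n) * K * M"
    using A_bound_nonneg order_trans[OF norm_ge_zero M] by simp
  have "norm ((A w ** G t w) $ i $ j) \<le> real CARD('n) * norm (A w) * norm (G t w)"
    by (rule norm_matrix_mult_nth_le)
  also have "\<dots> \<le> real CARD('n) * K * M"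
    using A_bound[OF w] M A_bound_nonneg by (intro mult_mono) auto
  finally have "norm ((A w ** G t w) $ i $ j) / norm (w - of_real t) \<le> real CARD('n) * K * M / (t / 2)"
    using cball_far_from_large_real(3)[OF w t] t_pos bound_nonneg by (intro frac_le) auto
  also have "\<dots> = 2 * real CARD('n) * K * M / t"
    by (simp add: field_simps)
  finally show ?thesis
    by (simp add: norm_divide)
qed

lemma G_deviation_le_max:
  assumes t: "2 * (norm x0 + \<delta>) + 1 \<le> t"
    and M: "\<And>y. y \<in> cball x0 \<delta> \<Longrightarrow> norm (G t y) \<le> M"
    and y: "y \<in> cball x0 \<delta>"
  shows "norm (G t y - G t x0) \<le> 2 * real CARD('n) ^ 3 * K * \<delta> * M / t"
proof -
  have t_pos: "0 < t" using large_real_pos[OF t(1)] .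
  have M_nonneg: "0 \<le> M" using order_trans[OF norm_ge_zero M[OF y]] .
  have entry: "norm (G t y $ i $ j - G t x0 $ i $ j) \<le> 2 * real CARD('n) * K * M / t * norm (y - x0)" for i j
  proof (rule field_differentiable_bound[OF convex_cball])
    fix w assume w: "w \<in> cball x0 \<delta>"
    then show "((\<lambda>y. G t y $ i $ j) has_field_derivative (A w ** G t w) $ i $ j / (w - of_real t))
        (at w within cball x0 \<delta>)"
      using G_has_field_derivative cball_subset cball_far_from_large_real(2)[OF w t]
      by (blast intro: has_field_derivative_at_within)
    show "norm ((A w ** G t w) $ i $ j / (w - of_real t)) \<le> 2 * real CARD('n) * K * M / t"
      by (rule G_derivative_nth_le[OF t w M[OF w]])
  qed (use y \<delta>_pos in auto)
  have "norm (G t y - G t x0) \<le> (\<Sum>i\<in>UNIV. \<Sum>j\<in>UNIV. norm (G t y $ i $ j - G t x0 $ i $ j))"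
    using norm_le_sum_norm_matrix_nth[of "G t y - G t x0"] by simp
  also have "\<dots> \<le> (\<Sum>i\<in>(UNIV :: 'n set). \<Sum>j\<in>(UNIV :: 'n set). 2 * real CARD('n) * K * M / t * \<delta>)"
  proof (intro sum_mono)
    fix i j
    have "norm (y - x0) \<le> \<delta>" using y by (simp add: dist_norm norm_minus_commute)
    then show "norm (G t y $ i $ j - G t x0 $ i $ j) \<le> 2 * real CARD('n) * K * M / t * \<delta>"
      using entry[of i j] t_pos A_bound_nonneg M_nonneg
      by (smt (verit) mult_left_mono divide_nonneg_pos mult_nonneg_nonneg of_nat_0_le_iff)
  qed
  also have "\<dots> = 2 * real CARD('n) ^ 3 * K * \<delta> * M / t"
    by (simp add: power3_eq_cube)
  finally show ?thesis .
qed

(* The mean value bound with M the maximum of norm (G t) on the ball gives M <= norm (G t x0) + M/2,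
   so M <= 2 * norm (G t x0). *)
lemma G_deviation_le:
  assumes t: "2 * (norm x0 + \<delta>) + 1 \<le> t" "4 * real CARD('n) ^ 3 * K * \<delta> \<le> t"
    and y: "y \<in> cball x0 \<delta>"
  shows "norm (G t y - G t x0) \<le> 4 * real CARD('n) ^ 3 * K * \<delta> * norm (G t x0) / t"
proof -
  have t_pos: "0 < t" using large_real_pos[OF t(1)] .
  have "continuous_on (cball x0 \<delta>) (G t)"
    using G_has_field_derivative cball_subset cball_far_from_large_real(2)[OF _ t(1)]
    by (intro continuous_on_matrixI continuous_at_imp_continuous_on ballI DERIV_continuous) blast
  then obtain ym where ym: "ym \<in> cball x0 \<delta>" "\<And>y. y \<in> cball x0 \<delta> \<Longrightarrow> norm (G t y) \<le> norm (G t ym)"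
    using continuous_attains_sup[OF compact_cball _ continuous_on_norm] \<delta>_pos
    by (metis centre_in_cball less_le empty_iff)
  define \<theta> where "\<theta> = 2 * real CARD('n) ^ 3 * K * \<delta> / t"
  have \<theta>: "0 \<le> \<theta>" "\<theta> \<le> 1/2"
    using t t_pos A_bound_nonneg \<delta>_pos by (auto simp: \<theta>_def field_simps)
  have deviation: "norm (G t y - G t x0) \<le> \<theta> * norm (G t ym)" if "y \<in> cball x0 \<delta>" for y
    using G_deviation_le_max[OF t(1) ym(2) that] by (simp add: \<theta>_def)
  have "norm (G t ym) \<le> norm (G t x0) + norm (G t ym - G t x0)"
    by (rule norm_triangle_sub)
  also have "\<dots> \<le> norm (G t x0) + norm (G t ym) / 2"
    using deviation[OF ym(1)] mult_right_mono[OF \<theta>(2) norm_ge_zero[of "G t ym"]] by simp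
  finally have "norm (G t ym) \<le> 2 * norm (G t x0)" by simp
  then have "norm (G t y - G t x0) \<le> \<theta> * (2 * norm (G t x0))"
    using deviation[OF y] \<theta> by (smt (verit) mult_left_mono)
  then show ?thesis by (simp add: \<theta>_def)
qed

lemma G_uniform_limit: "uniform_limit (cball x0 \<delta>) G (\<lambda>_. mat 1) at_top"
proof -
  have x0: "x0 \<in> U" using cball_subset \<delta>_pos by auto
  define b where "b t = 4 * real CARD('n) ^ 3 * K * \<delta> * norm (G t x0) * inverse t + norm (G t x0 - mat 1)" for t
  have "(b \<longlongrightarrow> 4 * real CARD('n) ^ 3 * K * \<delta> * norm (mat 1 :: complex^'n^'n) * 0 + norm (mat 1 - mat 1 :: complex^'n^'n)) at_top"
    unfolding b_def
    by (intro tendsto_intros G_tendsto[OF x0] tendsto_inverse_0_at_top filterlim_ident)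
  then have b_limit: "uniform_limit (cball x0 \<delta>) (\<lambda>t y. b t) (\<lambda>_. 0) at_top"
    by (intro uniform_limit_of_tendsto) simp
  have "\<forall>\<^sub>F t in at_top. \<forall>y\<in>cball x0 \<delta>. norm (G t y - mat 1) \<le> b t"
    using eventually_ge_at_top[of "2 * (norm x0 + \<delta>) + 1"] eventually_ge_at_top[of "4 * real CARD('n) ^ 3 * K * \<delta>"]
  proof eventually_elim
    case (elim t)
    show ?case
    proof
      fix y assume "y \<in> cball x0 \<delta>"
      have "norm (G t y - mat 1) \<le> norm (G t y - G t x0) + norm (G t x0 - mat 1)"
        using norm_triangle_ineq[of "G t y - G t x0" "G t x0 - mat 1"] by simp
      also have "\<dots> \<le> b t"
        using G_deviation_le[OF elim \<open>y \<in> cball x0 \<delta>\<close>] by (simp add: b_def divide_inverse)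
      finally show "norm (G t y - mat 1) \<le> b t" .
    qed
  qed
  from uniform_limit_null_comparison[OF this b_limit]
  show ?thesis by (rule uniform_limit_iff_diff_zero[THEN iffD2])
qed

lemma scaled_G_derivative_estimate:
  assumes y: "y \<in> cball x0 \<delta>" and t: "2 * (norm x0 + \<delta>) + 1 \<le> t"
  shows "norm (of_real t * ((A y ** G t y) $ i $ j / (y - of_real t)) + A y $ i $ j)
    \<le> 2 * real CARD('n) * K * norm (G t y - mat 1) + 2 * (norm x0 + \<delta>) * K / t"
proof -
  define W where "W = G t y - mat 1"
  have t_pos: "0 < t" using large_real_pos[OF t(1)] .
  have far: "t / 2 \<le> norm (y - of_real t)" by (rule cball_far_from_large_real(3)[OF y t])
  then have ne: "y - of_real t \<noteq> 0" using t_pos by auto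
  have "G t y = W + mat 1" by (simp add: W_def)
  then have "(A y ** G t y) $ i $ j = (A y ** W) $ i $ j + A y $ i $ j"
    by (simp add: matrix_add_ldistrib matrix_mul_rid)
  moreover have "of_real t * ((a + b) / (y - of_real t)) + b
      = (of_real t / (y - of_real t)) * a + (y / (y - of_real t)) * b" for a b
    using ne by (simp add: divide_simps) (simp add: algebra_simps)
  ultimately have "of_real t * ((A y ** G t y) $ i $ j / (y - of_real t)) + A y $ i $ j
      = (of_real t / (y - of_real t)) * (A y ** W) $ i $ j + (y / (y - of_real t)) * A y $ i $ j"
    by simp
  also have "norm \<dots> \<le> 2 * (real CARD('n) * K * norm W) + (2 * (norm x0 + \<delta>) / t) * K"
  proof (rule order_trans[OF norm_triangle_ineq], unfold norm_mult, intro add_mono mult_mono)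
    have d_pos: "0 < norm (y - of_real t)" using far t_pos by linarith
    then show "norm (of_real t / (y - of_real t)) \<le> 2"
      using far t_pos by (simp add: norm_divide pos_divide_le_eq)
    have "norm y / norm (y - of_real t) \<le> (norm x0 + \<delta>) / (t / 2)"
      using cball_far_from_large_real(1)[OF y t] far t_pos \<delta>_pos by (intro frac_le) auto
    also have "\<dots> = 2 * (norm x0 + \<delta>) / t"
      by (simp add: field_simps)
    finally show "norm (y / (y - of_real t)) \<le> 2 * (norm x0 + \<delta>) / t"
      by (simp add: norm_divide)
    show "norm ((A y ** W) $ i $ j) \<le> real CARD('n) * K * norm W"
      using norm_matrix_mult_nth_le[of "A y" W i j] A_bound[OF y]
      by (smt (verit) mult_right_mono mult_left_mono norm_ge_zero of_nat_0_le_iff)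
    show "norm (A y $ i $ j) \<le> K"
      using norm_matrix_nth_le A_bound[OF y] order_trans by blast
  qed (use A_bound_nonneg \<delta>_pos t_pos in auto)
  finally show ?thesis by (simp add: W_def algebra_simps)
qed

lemma scaled_G_derivative_uniform_limit:
  "uniform_limit (cball x0 \<delta>)
     (\<lambda>t y. of_real t * ((A y ** G t y) $ i $ j / (y - of_real t))) (\<lambda>y. - A y $ i $ j) at_top"
proof -
  let ?b = "\<lambda>t y. 2 * real CARD('n) * K * norm (G t y - mat 1) + 2 * (norm x0 + \<delta>) * K / t"
  have "uniform_limit (cball x0 \<delta>) (\<lambda>t y. norm (G t y - mat 1)) (\<lambda>_. 0) at_top"
    using uniform_limit_norm[OF uniform_limit_iff_diff_zero[THEN iffD1, OF G_uniform_limit]] by simp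
  from bounded_linear.uniform_limit[OF bounded_linear_mult_right[of "2 * real CARD('n) * K"] this]
  have deviation_term: "uniform_limit (cball x0 \<delta>) (\<lambda>t y. 2 * real CARD('n) * K * norm (G t y - mat 1)) (\<lambda>_. 0) at_top"
    by simp
  have distance_term: "uniform_limit (cball x0 \<delta>) (\<lambda>t y. 2 * (norm x0 + \<delta>) * K / t) (\<lambda>_. 0) at_top"
    by (intro uniform_limit_of_tendsto tendsto_divide_0[OF tendsto_const]
        filterlim_at_top_imp_at_infinity filterlim_ident)
  have b_limit: "uniform_limit (cball x0 \<delta>) ?b (\<lambda>_. 0) at_top"
    using uniform_limit_add[OF deviation_term distance_term] by simp
  have "\<forall>\<^sub>F t in at_top. \<forall>y\<in>cball x0 \<delta>.
      norm (of_real t * ((A y ** G t y) $ i $ j / (y - of_real t)) - - A y $ i $ j) \<le> ?b t y"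
    using eventually_ge_at_top[of "2 * (norm x0 + \<delta>) + 1"]
    by eventually_elim (use scaled_G_derivative_estimate in simp)
  from uniform_limit_null_comparison[OF this b_limit]
  show ?thesis by (rule uniform_limit_iff_diff_zero[THEN iffD2])
qed

end

lemma scaled_G_difference_tendsto:
  assumes "y \<in> U" "x \<in> U"
  shows "((\<lambda>t. of_real t * (G t y $ i $ j - G t x $ i $ j)) \<longlongrightarrow> \<Psi> y $ i $ j - \<Psi> x $ i $ j) at_top"
proof -
  have nth_limit: "((\<lambda>t. of_real t * (G t x $ i $ j - mat 1 $ i $ j)) \<longlongrightarrow> \<Psi> x $ i $ j) at_top"
    if "x \<in> U" for x
    using tendsto_vec_nth[OF tendsto_vec_nth[OF G_expansion[OF that]], of i j]
    by (simp only: vector_scaleR_component vector_minus_component) (simp add: scaleR_conv_of_real)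
  from tendsto_diff[OF nth_limit[OF assms(1)] nth_limit[OF assms(2)]]
  show ?thesis by (simp add: algebra_simps)
qed

lemma Psi_has_field_derivative:
  assumes x0: "x0 \<in> U"
  shows "((\<lambda>x. \<Psi> x $ i $ j) has_field_derivative - A x0 $ i $ j) (at x0)"
proof -
  obtain \<delta> where \<delta>: "cball x0 \<delta> \<subseteq> U" "0 < \<delta>"
    using open_contains_cball open_U x0 by blast
  have "bounded (A ` cball x0 \<delta>)"
    using compact_continuous_image[OF continuous_on_subset[OF continuous_on_A \<delta>(1)]]
    by (intro compact_imp_bounded) simp
  then obtain K where K: "\<And>y. y \<in> cball x0 \<delta> \<Longrightarrow> norm (A y) \<le> K"
    unfolding bounded_iff by blast
  define \<tau> where "\<tau> n = 2 * (norm x0 + \<delta>) + 1 + real n" for n :: nat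
  have \<tau>: "filterlim \<tau> at_top sequentially"
    unfolding \<tau>_def by (intro filterlim_tendsto_add_at_top[OF tendsto_const] filterlim_real_sequentially)
  define f where "f n y = of_real (\<tau> n) * (G (\<tau> n) y $ i $ j - G (\<tau> n) x0 $ i $ j)" for n y
  define f' where "f' n y = of_real (\<tau> n) * ((A y ** G (\<tau> n) y) $ i $ j / (y - of_real (\<tau> n)))" for n y
  have f'_limit: "uniform_limit (cball x0 \<delta>) f' (\<lambda>y. - A y $ i $ j) sequentially"
    using filterlim_compose[OF scaled_G_derivative_uniform_limit[OF \<delta> K] \<tau>] unfolding f'_def .
  have "\<exists>g. \<forall>y\<in>ball x0 \<delta>. (\<lambda>n. f n y) \<longlonglongrightarrow> g y \<and>
      (g has_field_derivative - A y $ i $ j) (at y within ball x0 \<delta>)"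
  proof (rule has_complex_derivative_sequence[OF convex_ball])
    fix n y assume "y \<in> ball x0 \<delta>"
    then have "y \<in> U" "max 1 (norm y) < \<tau> n"
      using \<delta> cball_far_from_large_real(2)[OF \<delta> K, of y "\<tau> n"] by (auto simp: \<tau>_def)
    from G_has_field_derivative[OF this, of i j]
    have "(f n has_field_derivative f' n y) (at y)"
      unfolding f_def f'_def by (auto intro!: derivative_eq_intros)
    then show "(f n has_field_derivative f' n y) (at y within ball x0 \<delta>)"
      by (rule has_field_derivative_at_within)
  next
    fix e :: real assume "0 < e"
    then obtain N where "\<forall>n\<ge>N. \<forall>y\<in>cball x0 \<delta>. dist (f' n y) (- A y $ i $ j) < e"
      using f'_limit by (auto simp: uniform_limit_sequentially_iff)
    then show "\<exists>N. \<forall>n y. N \<le> n \<longrightarrow> y \<in> ball x0 \<delta> \<longrightarrow> norm (f' n y - - A y $ i $ j) \<le> e"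
      by (auto simp: dist_norm intro!: exI[of _ N] less_imp_le)
  next
    show "\<exists>y l. y \<in> ball x0 \<delta> \<and> (\<lambda>n. f n y) \<longlonglongrightarrow> l"
      using \<delta>(2) by (intro exI[of _ x0] exI[of _ 0]) (simp add: f_def)
  qed
  then obtain g where g: "\<And>y. y \<in> ball x0 \<delta> \<Longrightarrow> (\<lambda>n. f n y) \<longlonglongrightarrow> g y"
    "\<And>y. y \<in> ball x0 \<delta> \<Longrightarrow> (g has_field_derivative - A y $ i $ j) (at y within ball x0 \<delta>)"
    by blast
  have g_eq: "g y = \<Psi> y $ i $ j - \<Psi> x0 $ i $ j" if "y \<in> ball x0 \<delta>" for y
  proof (rule LIMSEQ_unique[OF g(1)[OF that]])
    have "y \<in> U" using that \<delta>(1) by auto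
    from filterlim_compose[OF scaled_G_difference_tendsto[OF this x0] \<tau>]
    show "(\<lambda>n. f n y) \<longlonglongrightarrow> \<Psi> y $ i $ j - \<Psi> x0 $ i $ j"
      unfolding f_def .
  qed
  have "x0 \<in> ball x0 \<delta>" using \<delta>(2) by simp
  then have "((\<lambda>y. g y + \<Psi> x0 $ i $ j) has_field_derivative - A x0 $ i $ j) (at x0)"
    using g(2) at_within_open[OF _ open_ball] by (fastforce intro: derivative_eq_intros)
  then show ?thesis
    by (rule has_field_derivative_transform_within_open[OF _ open_ball \<open>x0 \<in> ball x0 \<delta>\<close>])
       (simp add: g_eq)
qed

end

lemma has_field_derivative_matrix_mult_const:
  fixes F :: "'a::real_normed_field \<Rightarrow> 'a^'k^'m"
  assumes "\<And>k. ((\<lambda>y. F y $ i $ k) has_field_derivative F' $ i $ k) (at x)"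
  shows "((\<lambda>y. (F y ** C) $ i $ j) has_field_derivative (F' ** C) $ i $ j) (at x)"
  unfolding matrix_matrix_mult_def using assms by (auto intro!: derivative_eq_intros)

lemma mat2_nth [simp]:
  "mat2 a b c d $ 1 $ 1 = a" "mat2 a b c d $ 1 $ 2 = b" "mat2 a b c d $ 2 $ 1 = c" "mat2 a b c d $ 2 $ 2 = d"
  by (simp_all add: mat2_def)

lemma mat2_mult:
  "mat2 a b c d ** mat2 a' b' c' d' = mat2 (a*a' + b*c') (a*b' + b*d') (c*a' + d*c') (c*b' + d*d')"
  by (simp add: mat2_def matrix_matrix_mult_def vec_eq_iff forall_2 sum_2)

lemma mat2_add: "mat2 a b c d + mat2 a' b' c' d' = mat2 (a + a') (b + b') (c + c') (d + d')"
  by (simp add: mat2_def vec_eq_iff forall_2)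

lemma mat2_diff: "mat2 a b c d - mat2 a' b' c' d' = mat2 (a - a') (b - b') (c - c') (d - d')"
  by (simp add: mat2_def vec_eq_iff forall_2)

lemma mat_1_eq_mat2: "(mat 1 :: complex^2^2) = mat2 1 0 0 1"
  by (simp add: mat2_def mat_def vec_eq_iff forall_2)

lemma cscale_mat2: "cscale k (mat2 a b c d) = mat2 (k * a) (k * b) (k * c) (k * d)"
  by (simp add: mat2_def cscale_def vec_eq_iff forall_2)

lemma cscale_nth [simp]: "cscale k M $ i $ j = k * M $ i $ j"
  by (simp add: cscale_def)

lemma cscale_mult: "cscale k A ** B = cscale k (A ** B)"
  by (simp add: cscale_def matrix_matrix_mult_def vec_eq_iff sum_distrib_left mult.assoc)

lemma continuous_on_mat2:
  assumes "continuous_on S a" "continuous_on S b" "continuous_on S c" "continuous_on S d"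
  shows "continuous_on S (\<lambda>x. mat2 (a x) (b x) (c x) (d x))"
proof (rule continuous_on_matrixI)
  fix i j :: 2
  show "continuous_on S (\<lambda>x. mat2 (a x) (b x) (c x) (d x) $ i $ j)"
    using exhaust_2[of i] exhaust_2[of j] assms by auto
qed

definition zpow_Rinf_Ainf :: "complex \<Rightarrow> complex^2^2" where
  "zpow_Rinf_Ainf z = (mat 1 + cscale (Ln z) Rinf) ** mat2 (exp ((1/2) * Ln z)) 0 0 (exp (- (1/2) * Ln z))"

lemma zpow_negAinf_negRinf_inverse: "zpow_negAinf z ** zpow_negRinf z ** zpow_Rinf_Ainf z = mat 1"
proof -
  have "exp (- (1/2) * Ln z) * exp ((1/2) * Ln z) = 1" "exp ((1/2) * Ln z) * exp (- (1/2) * Ln z) = 1"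
    by (simp_all flip: exp_add)
  then show ?thesis
    unfolding zpow_negAinf_def zpow_negRinf_def zpow_Rinf_Ainf_def Rinf_def mat_1_eq_mat2
      cscale_mat2 mat2_add mat2_diff mat2_mult
    by (simp add: algebra_simps)
qed

lemma tendsto_scaled_gauge_minus_1:
  fixes \<Phi> :: "complex \<Rightarrow> complex \<Rightarrow> complex^2^2" and E :: "complex \<Rightarrow> complex^2^2"
  assumes "x \<in> U"
    and E: "\<And>z. (z, x) \<in> dom_zx U \<Longrightarrow>
      \<Phi> z x = (mat 1 + cscale (1 / z) (\<Psi>1 x) + E z) ** zpow_negAinf z ** zpow_negRinf z"
    and C: "\<And>z. (z, x) \<in> dom_zx U \<Longrightarrow> r \<le> norm z \<Longrightarrow> norm (E z) \<le> C / (norm z)^2"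
  shows "((\<lambda>t. t *\<^sub>R (\<Phi> (of_real t) x ** zpow_Rinf_Ainf (of_real t) - mat 1)) \<longlongrightarrow> \<Psi>1 x) at_top"
proof -
  have large_t: "\<forall>\<^sub>F t in at_top. (of_real t, x) \<in> dom_zx U \<and> r \<le> t \<and> 0 < t"
    using eventually_gt_at_top[of "max (max 1 (norm x)) r"]
    by eventually_elim (use \<open>x \<in> U\<close> in \<open>auto simp: dom_zx_def\<close>)
  then have "\<forall>\<^sub>F t in at_top. norm (E (of_real t)) \<le> C / t\<^sup>2"
    by eventually_elim (use C[of "of_real _"] in simp)
  then have "((\<lambda>t. \<Psi>1 x + t *\<^sub>R E (of_real t)) \<longlongrightarrow> \<Psi>1 x + 0) at_top"
    by (intro tendsto_add tendsto_const tendsto_scaleR_zero_of_decay)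
  moreover have "\<forall>\<^sub>F t in at_top.
      \<Psi>1 x + t *\<^sub>R E (of_real t) = t *\<^sub>R (\<Phi> (of_real t) x ** zpow_Rinf_Ainf (of_real t) - mat 1)"
    using large_t
  proof eventually_elim
    case (elim t)
    let ?M = "mat 1 + cscale (1 / of_real t) (\<Psi>1 x) + E (of_real t)" and ?z = "complex_of_real t"
    have "\<Phi> ?z x ** zpow_Rinf_Ainf ?z = ?M ** (zpow_negAinf ?z ** zpow_negRinf ?z ** zpow_Rinf_Ainf ?z)"
      using E elim by (simp add: matrix_mul_assoc)
    then have "\<Phi> ?z x ** zpow_Rinf_Ainf ?z = ?M"
      by (simp add: zpow_negAinf_negRinf_inverse matrix_mul_rid)
    with elim show ?case
      by (simp add: vec_eq_iff) (simp add: scaleR_conv_of_real field_simps)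
  qed
  ultimately show ?thesis
    using tendsto_cong by fastforce
qed

lemma normalized_deformation_A2:
  fixes s :: "complex \<Rightarrow> complex"
    and \<Phi> :: "complex \<Rightarrow> complex \<Rightarrow> complex^2^2"
    and \<Psi>1 :: "complex \<Rightarrow> complex^2^2"
  assumes U: "open U" "0 \<notin> U" "1 \<notin> U"
    and sqrt_branch: "continuous_on U s" "\<And>x. x \<in> U \<Longrightarrow> (s x)^2 = x"
    and pde_x: "\<And>z x i j. (z, x) \<in> dom_zx U \<Longrightarrow>
        ((\<lambda>y. \<Phi> z y $ i $ j) has_field_derivative
           ((cscale (- 1 / (z - x)) (A2 (s x)) ** \<Phi> z x) $ i $ j)) (at x)"
    and expansion: "\<And>x. x \<in> U \<Longrightarrow> \<exists>E :: complex \<Rightarrow> complex^2^2.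
        (\<forall>z. (z, x) \<in> dom_zx U \<longrightarrow>
            \<Phi> z x = (mat 1 + cscale (1 / z) (\<Psi>1 x) + E z) ** zpow_negAinf z ** zpow_negRinf z)
        \<and> (\<exists>C r. \<forall>z. (z, x) \<in> dom_zx U \<and> r \<le> norm z \<longrightarrow> norm (E z) \<le> C / (norm z)^2)"
  shows "normalized_deformation U (\<lambda>x. A2 (s x)) (\<lambda>t x. \<Phi> (of_real t) x ** zpow_Rinf_Ainf (of_real t)) \<Psi>1"
proof
  have large_real_in_domain: "(of_real t, x) \<in> dom_zx U" if "x \<in> U" "max 1 (norm x) < t" for t x
    using that by (auto simp: dom_zx_def)
  show "open U" by (fact U(1))
  have s_ne: "s x \<noteq> 0" "s x + 1 \<noteq> 0" if "x \<in> U" for x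
    using square_root_ne_0_and_minus_1[OF sqrt_branch(2)[OF that]] U(2,3) that by auto
  moreover have "2 * s x + 2 \<noteq> 0" if "x \<in> U" for x
  proof -
    have "2 * s x + 2 = 2 * (s x + 1)" by simp
    also have "\<dots> \<noteq> 0" using s_ne(2)[OF that] by (metis mult_eq_0_iff zero_neq_numeral)
    finally show ?thesis .
  qed
  ultimately show "continuous_on U (\<lambda>x. A2 (s x))"
    unfolding A2_def by (intro continuous_on_mat2 continuous_intros sqrt_branch(1)) auto
  fix t :: real and x :: complex and i j :: 2
  assume "x \<in> U" "max 1 (norm x) < t"
  then have "((\<lambda>y. (\<Phi> (of_real t) y ** zpow_Rinf_Ainf (of_real t)) $ i $ j) has_field_derivative
      (cscale (- 1 / (of_real t - x)) (A2 (s x)) ** \<Phi> (of_real t) x ** zpow_Rinf_Ainf (of_real t)) $ i $ j) (at x)"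
    using pde_x large_real_in_domain by (intro has_field_derivative_matrix_mult_const) blast
  then show "((\<lambda>y. (\<Phi> (of_real t) y ** zpow_Rinf_Ainf (of_real t)) $ i $ j) has_field_derivative
      (A2 (s x) ** (\<Phi> (of_real t) x ** zpow_Rinf_Ainf (of_real t))) $ i $ j / (x - of_real t)) (at x)"
    unfolding minus_diff_eq[of "of_real t" x, symmetric] divide_minus_right
    by (simp add: cscale_mult matrix_mul_assoc)
next
  fix x assume "x \<in> U"
  then obtain E C r where "\<And>z. (z, x) \<in> dom_zx U \<Longrightarrow>
      \<Phi> z x = (mat 1 + cscale (1 / z) (\<Psi>1 x) + E z) ** zpow_negAinf z ** zpow_negRinf z"
    and "\<And>z. (z, x) \<in> dom_zx U \<Longrightarrow> r \<le> norm z \<Longrightarrow> norm (E z) \<le> C / (norm z)^2"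
    using expansion by meson
  then show "((\<lambda>t. t *\<^sub>R (\<Phi> (of_real t) x ** zpow_Rinf_Ainf (of_real t) - mat 1)) \<longlongrightarrow> \<Psi>1 x) at_top"
    by (rule tendsto_scaled_gauge_minus_1[OF \<open>x \<in> U\<close>])
qed

theorem mainTheorem9:
  fixes U :: "complex set"
    and s :: "complex \<Rightarrow> complex"
    and \<Phi> :: "complex \<Rightarrow> complex \<Rightarrow> complex^2^2"
    and \<Psi>1 :: "complex \<Rightarrow> complex^2^2"
  assumes U: "open U" "connected U" "U \<noteq> {}" "0 \<notin> U" "1 \<notin> U"
    and sqrt_branch: "s holomorphic_on U" "\<And>x. x \<in> U \<Longrightarrow> (s x)^2 = x"
    and ode_z: "\<And>z x i j. (z, x) \<in> dom_zx U \<Longrightarrow>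
        ((\<lambda>w. \<Phi> w x $ i $ j) has_field_derivative ((fuchs_coeff (s x) x z ** \<Phi> z x) $ i $ j)) (at z)"
    and fundamental: "\<And>z x. (z, x) \<in> dom_zx U \<Longrightarrow> det (\<Phi> z x) \<noteq> 0"
    and pde_x: "\<And>z x i j. (z, x) \<in> dom_zx U \<Longrightarrow>
        ((\<lambda>y. \<Phi> z y $ i $ j) has_field_derivative
           ((cscale (- 1 / (z - x)) (A2 (s x)) ** \<Phi> z x) $ i $ j)) (at x)"
    and expansion: "\<And>x. x \<in> U \<Longrightarrow> \<exists>E :: complex \<Rightarrow> complex^2^2.
        (\<forall>z. (z, x) \<in> dom_zx U \<longrightarrow>
            \<Phi> z x = (mat 1 + cscale (1 / z) (\<Psi>1 x) + E z) ** zpow_negAinf z ** zpow_negRinf z)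
        \<and> (\<exists>C r. \<forall>z. (z, x) \<in> dom_zx U \<and> r \<le> norm z \<longrightarrow> norm (E z) \<le> C / (norm z)^2)"
  shows "(\<exists>c. \<forall>x\<in>U. exp (c - \<Psi>1 x $ 1 $ 2) = s x + 1)
       \<and> \<not> (\<exists>p q :: complex poly. \<forall>x\<in>U. poly q (s x) \<noteq> 0 \<and>
              \<Psi>1 x $ 1 $ 2 = poly p (s x) / poly q (s x))"
proof -
  have s_nonzero: "s x \<noteq> 0" and s_plus_1_nonzero: "s x + 1 \<noteq> 0" if "x \<in> U" for x
    using square_root_ne_0_and_minus_1[OF sqrt_branch(2)[OF that]] U(4,5) that by auto
  have s': "(s has_field_derivative 1 / (2 * s x)) (at x)" if "x \<in> U" for x
    by (rule sqrt_branch_has_field_derivative[OF U(1) sqrt_branch that])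
  interpret normalized_deformation U "\<lambda>x. A2 (s x)"
      "\<lambda>t x. \<Phi> (of_real t) x ** zpow_Rinf_Ainf (of_real t)" \<Psi>1
    using holomorphic_on_imp_continuous_on[OF sqrt_branch(1)]
    by (intro normalized_deformation_A2[OF U(1,4,5) _ sqrt_branch(2) pde_x expansion])
  have \<Psi>1': "((\<lambda>x. \<Psi>1 x $ 1 $ 2) has_field_derivative - (1 / (2 * s x) / (s x + 1))) (at x)"
    if "x \<in> U" for x
    using Psi_has_field_derivative[OF that, where i = 1 and j = 2] s_nonzero[OF that] s_plus_1_nonzero[OF that]
    by (simp add: A2_def field_simps)
  show ?thesis
  proof
    show "\<exists>c. \<forall>x\<in>U. exp (c - \<Psi>1 x $ 1 $ 2) = s x + 1"
    proof (rule exp_eq_of_log_derivative[OF U(1,2)])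
      show "((\<lambda>x. s x + 1) has_field_derivative 1 / (2 * s x)) (at x)" if "x \<in> U" for x
        using DERIV_add[OF s'[OF that] DERIV_const] by simp
    qed (use s_plus_1_nonzero \<Psi>1' in auto)
    have "inj_on s U"
      by (rule inj_onI) (metis sqrt_branch(2))
    then show "\<not> (\<exists>p q :: complex poly. \<forall>x\<in>U. poly q (s x) \<noteq> 0 \<and>
              \<Psi>1 x $ 1 $ 2 = poly p (s x) / poly q (s x))"
      using logarithm_not_rational_in_branch[OF U(1,3) _ _ s', of "-1" "\<lambda>x. \<Psi>1 x $ 1 $ 2" "-1"]
        s_nonzero \<Psi>1' by fastforce
  qed
qed

end
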